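(* Let $n$ be odd and squarefree, and let $A=S(n)$. Let $S=(x_1,\ldots,x_l)$ be a sequence in $\mathbb{Z}_n$ such that for every prime divisor $p$ of $n$, at least two terms of $S$ are coprime to $p$. Suppose at most one term of $S$ is a unit. Then $S$ is an $A$-weighted zero-sum sequence.
   Context: $\mathbb{Z}_n$ is the integers mod $n$, $U(n)$ its unit group. For $A\subseteq\mathbb{Z}_n$, a sequence $(x_1,\ldots,x_l)$ is an $A$-weighted zero-sum sequence if there exist $a_1,\ldots,a_l\in A$ with $\sum a_ix_i=0$. For odd $n=\prod p_i^{r_i}$ and $a\in U(n)$, $\left(\frac{a}{n}\right)=\prod\left(\frac{a}{p_i}\right)^{r_i}$ (Legendre symbols of the images of $a$ mod $p_i$), and $S(n)$ is the kernel of $a\mapsto\left(\frac{a}{n}\right)$ on $U(n)$. *)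

theory Defs
  imports "HOL-Number_Theory.Number_Theory" "HOL-Computational_Algebra.Squarefree"
begin

text \<open>Elements of Z_n are represented by integers in {0..<n}.
  The generalized symbol (a/n) = prod over primes p | n of (a/p)^(v_p(n)).\<close>

definition jacobi_sym :: "int \<Rightarrow> nat \<Rightarrow> int" where
  "jacobi_sym a n = (\<Prod>p\<in>prime_factors n. Legendre a (int p) ^ multiplicity p n)"

definition S_set :: "nat \<Rightarrow> int set" where
  "S_set n = {a \<in> {0..<int n}. coprime a (int n) \<and> jacobi_sym a n = 1}"

definition weighted_zero_sum :: "nat \<Rightarrow> int set \<Rightarrow> int list \<Rightarrow> bool" where
  "weighted_zero_sum n A xs \<longleftrightarrow>
     (\<exists>as. length as = length xs \<and> set as \<subseteq> A \<and>
        [(\<Sum>i<length xs. as ! i * xs ! i) = 0] (mod int n))"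

end

(*
  Weights are chosen prime by prime and glued by the Chinese remainder theorem.
  Modulo an odd prime p, two terms prime to p already admit unit weights with
  weighted sum 0. The Jacobi symbol of a glued weight is the product of the
  Legendre symbols of its components. A non-unit term is divisible by some
  prime p of n, so its weight modulo p can be switched between a residue and a
  non-residue without changing the sum modulo p; this sets its symbol to 1. The
  only term without such a prime is a unit, and its weight is normalised to 1.
*)

theory Submission
  imports Defs
begin

lemma coprime_int_prime_iff:
  assumes "prime p" shows "coprime a (int p) \<longleftrightarrow> \<not> int p dvd a"
  using assms by (rule residues_prime.p_coprime_right_int[OF residues_prime.intro])

lemma Legendre_cong:
  assumes "[a = b] (mod p)" shows "Legendre a p = Legendre b p"
proof -
  have "[a = 0] (mod p) \<longleftrightarrow> [b = 0] (mod p)" "QuadRes p a \<longleftrightarrow> QuadRes p b"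
    using assms cong_sym cong_trans unfolding QuadRes_def by blast+
  then show ?thesis unfolding Legendre_def by simp
qed

lemma Legendre_one:
  assumes "prime p" shows "Legendre 1 (int p) = 1"
proof -
  have "\<not> [1 = 0] (mod int p)" using prime_gt_1_nat[OF assms] by (simp add: cong_0_iff)
  moreover have "QuadRes (int p) 1" unfolding QuadRes_def by (rule exI[of _ 1]) simp
  ultimately show ?thesis unfolding Legendre_def by simp
qed

lemma Legendre_coprime_pm1:
  assumes "prime p" "coprime a (int p)" shows "Legendre a (int p) \<in> {1, -1}"
  using assms by (auto simp: Legendre_def cong_0_iff coprime_int_prime_iff)

lemma Legendre_nonresidue_exists:
  assumes "prime p" "p > 2"
  obtains g where "coprime g (int p)" "Legendre g (int p) = -1"
proof -
  obtain r where r: "residue_primroot p r"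
    using prime_primitive_root_exists prime_gt_1_nat assms(1) by blast
  have cop: "coprime (int r) (int p)"
    using r by (simp add: residue_primroot_def coprime_commute)
  have "Legendre (int r) (int p) \<noteq> 1"
  proof
    assume "Legendre (int r) (int p) = 1"
    then have "[int r ^ ((p - 1) div 2) = int 1] (mod int p)"
      using euler_criterion[OF assms, of "int r"] by (simp add: cong_sym_eq)
    then have "[r ^ ((p - 1) div 2) = 1] (mod p)"
      by (simp only: cong_int_iff flip: of_nat_power)
    then have "ord p r dvd (p - 1) div 2" by (simp only: ord_divides)
    moreover have "ord p r = p - 1"
      using r assms(1) by (simp add: residue_primroot_def totient_prime)
    moreover have "0 < (p - 1) div 2" "(p - 1) div 2 < p - 1" using assms(2) by auto
    ultimately show False by (auto dest: dvd_imp_le)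
  qed
  with Legendre_coprime_pm1[OF assms(1) cop] have "Legendre (int r) (int p) = -1" by simp
  with cop show ?thesis by (rule that)
qed

lemma jacobi_sym_cong:
  assumes "[a = b] (mod int n)" shows "jacobi_sym a n = jacobi_sym b n"
  unfolding jacobi_sym_def
proof (rule prod.cong[OF refl])
  fix p assume "p \<in> prime_factors n"
  then have "int p dvd int n" by (simp add: in_prime_factors_iff)
  then have "[a = b] (mod int p)"
    using assms by (rule cong_dvd_modulus[rotated])
  then show "Legendre a (int p) ^ multiplicity p n = Legendre b (int p) ^ multiplicity p n"
    by (simp add: Legendre_cong)
qed

lemma jacobi_sym_one: "jacobi_sym 1 n = 1"
  unfolding jacobi_sym_def by (rule prod.neutral) (simp add: Legendre_one in_prime_factors_iff)

lemma jacobi_sym_coprime_pm1: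
  assumes "coprime a (int n)" shows "jacobi_sym a n \<in> {1, -1}"
proof -
  have "\<bar>Legendre a (int p) ^ multiplicity p n\<bar> = 1" if "p \<in> prime_factors n" for p
  proof -
    have "int p dvd int n" using that by (simp add: in_prime_factors_iff)
    then have "coprime a (int p)"
      using assms by (metis coprime_divisors dvd_refl)
    then show ?thesis
      using Legendre_coprime_pm1[of p a] that by (auto simp: power_abs in_prime_factors_iff)
  qed
  then have "\<bar>jacobi_sym a n\<bar> = 1" unfolding jacobi_sym_def abs_prod by simp
  then show ?thesis by auto
qed

lemma jacobi_sym_prime_mult:
  assumes "prime p" "\<not> p dvd m" "m > 0"
  shows "jacobi_sym a (p * m) = Legendre a (int p) * jacobi_sym a m"
proof -
  have factors: "prime_factors (p * m) = insert p (prime_factors m)"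
    using assms by (simp add: prime_factors_product prime_prime_factors)
  have p_notin: "p \<notin> prime_factors m" using assms(2) by auto
  have "multiplicity p (p * m) = Suc (multiplicity p m)"
    by (rule multiplicity_times_same) (use assms in auto)
  then have mult_p: "multiplicity p (p * m) = 1"
    using not_dvd_imp_multiplicity_0[OF assms(2)] by simp
  have mult_q: "multiplicity q (p * m) = multiplicity q m" if "q \<in> prime_factors m" for q
  proof -
    have "prime q" "q \<noteq> p" using that p_notin by auto
    then show ?thesis using assms
      by (simp add: prime_elem_multiplicity_mult_distrib prime_multiplicity_other)
  qed
  show ?thesis unfolding jacobi_sym_def factors
    using p_notin mult_p mult_q by (simp cong: prod.cong)
qed

lemma prime_unit_weights_zero_sum:
  fixes p :: nat and x :: "nat \<Rightarrow> int"
  assumes "prime p" "p > 2" and "card {i. i < L \<and> coprime (x i) (int p)} \<ge> 2"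
  obtains c where "\<And>i. coprime (c i) (int p)" "[(\<Sum>i<L. c i * x i) = 0] (mod int p)"
proof -
  obtain j1 j2 where j: "j1 < L" "j2 < L" "j1 \<noteq> j2"
    and unit: "coprime (x j1) (int p)" "coprime (x j2) (int p)"
    using assms(3) by (metis (no_types, lifting) card_le_Suc_iff insertCI numeral_2_eq_2 mem_Collect_eq)
  \<comment> \<open>All weights are 1 except at \<open>j1\<close>, where 1 or 2 keeps the partial sum \<open>r\<close> a unit,
    and at \<open>j2\<close>, where the weight solves the congruence.\<close>
  define s where "s = (\<Sum>i\<in>{..<L} - {j1, j2}. x i)"
  obtain k :: int where k: "k \<in> {1, 2}" "coprime (k * x j1 + s) (int p)"
  proof -
    have "\<not> int p dvd (2 * x j1 + s) - (1 * x j1 + s)"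
      using unit(1) coprime_int_prime_iff[OF assms(1)] by simp
    then show ?thesis using that dvd_diff coprime_int_prime_iff[OF assms(1)] by blast
  qed
  obtain w where w: "[x j2 * w = 1] (mod int p)"
    using cong_solve_coprime_int unit(2) by blast
  define r where "r = k * x j1 + s"
  have r_unit: "coprime r (int p)" using k(2) by (simp add: r_def)
  define c where "c i = (if i = j1 then k else if i = j2 then - r * w else 1)" for i
  show ?thesis
  proof (rule that[of c])
    have "coprime (x j2 * w) (int p)"
      using cong_imp_coprime[OF cong_sym[OF w]] by simp
    moreover have "coprime k (int p)"
      using k(1) prime_odd_nat[OF assms(1,2)] by (auto simp: coprime_left_2_iff_odd)
    ultimately show "coprime (c i) (int p)" for i
      using r_unit by (simp add: c_def)
    have rest: "(\<Sum>i\<in>{..<L} - {j1, j2}. c i * x i) = s"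
      unfolding s_def by (rule sum.cong) (auto simp: c_def)
    have "(\<Sum>i<L. c i * x i) = (\<Sum>i\<in>{..<L} - {j1, j2}. c i * x i) + (\<Sum>i\<in>{j1, j2}. c i * x i)"
      using j by (intro sum.subset_diff) auto
    also have "\<dots> = k * x j1 - r * (x j2 * w) + s"
      using j(3) by (simp add: rest c_def s_def algebra_simps)
    also have "[\<dots> = k * x j1 - r * 1 + s] (mod int p)"
      by (intro cong_add cong_diff cong_mult w cong_refl)
    finally show "[(\<Sum>i<L. c i * x i) = 0] (mod int p)" by (simp add: r_def)
  qed
qed

lemma unit_weights_normalize:
  fixes m :: int
  assumes "\<And>i. coprime (c i) m" "[(\<Sum>i<L. c i * x i) = 0] (mod m)"
  obtains c' where "\<And>i. coprime (c' i) m" "[c' u = 1] (mod m)"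
    "[(\<Sum>i<L. c' i * x i) = 0] (mod m)"
proof -
  obtain v where v: "[c u * v = 1] (mod m)"
    using cong_solve_coprime_int assms(1) by blast
  have "coprime v m"
    using cong_imp_coprime[OF cong_sym[OF v]] by simp
  moreover have "(\<Sum>i<L. c i * v * x i) = v * (\<Sum>i<L. c i * x i)"
    by (simp add: sum_distrib_left ac_simps)
  moreover have "[v * (\<Sum>i<L. c i * x i) = v * 0] (mod m)"
    by (intro cong_mult cong_refl assms(2))
  ultimately show ?thesis
    using assms(1) v by (intro that[of "\<lambda>i. c i * v"]) auto
qed

lemma unit_weights_prescribe_Legendre:
  fixes p :: nat
  assumes "prime p" "p > 2" "\<And>i. coprime (c i) (int p)"
    and "\<And>i. i \<in> I \<Longrightarrow> int p dvd x i" "\<And>i. \<tau> i \<in> {1, -1}"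
  obtains c' where "\<And>i. coprime (c' i) (int p)" "\<And>i. i \<notin> I \<Longrightarrow> c' i = c i"
    "\<And>i. i \<in> I \<Longrightarrow> Legendre (c' i) (int p) = \<tau> i"
    "[(\<Sum>i<L. c' i * x i) = (\<Sum>i<L. c i * x i)] (mod int p)"
proof -
  obtain g where g: "coprime g (int p)" "Legendre g (int p) = -1"
    using Legendre_nonresidue_exists assms(1,2) by blast
  define c' where "c' i = (if i \<in> I then if \<tau> i = 1 then 1 else g else c i)" for i
  show ?thesis
  proof (rule that[of c'])
    show "coprime (c' i) (int p)" for i using g(1) assms(3) by (simp add: c'_def)
    show "c' i = c i" if "i \<notin> I" for i using that by (simp add: c'_def)
    show "Legendre (c' i) (int p) = \<tau> i" if "i \<in> I" for i
      using that assms(5)[of i] g(2) Legendre_one[OF assms(1)] by (auto simp: c'_def)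
    have "[c' i * x i = c i * x i] (mod int p)" for i
      using assms(4)[of i] by (auto simp: c'_def cong_iff_dvd_diff simp flip: left_diff_distrib)
    then show "[(\<Sum>i<L. c' i * x i) = (\<Sum>i<L. c i * x i)] (mod int p)"
      by (intro cong_sum)
  qed
qed

lemma odd_squarefree_prime_split:
  fixes n :: nat
  assumes "odd n" "squarefree n" "n \<noteq> 1"
  obtains p m where "n = p * m" "prime p" "p > 2" "\<not> p dvd m"
    "odd m" "squarefree m" "0 < m" "m < n"
proof -
  obtain p where p: "prime p" "p dvd n" using prime_factor_nat assms(3) by blast
  define m where "m = n div p"
  have n: "n = p * m" using p(2) by (simp add: m_def)
  have "\<not> p dvd m"
  proof
    assume "p dvd m"
    then have "p * p dvd n" by (simp add: n)
    then show False using squarefreeD[OF assms(2), of p] p(1) by (simp add: power2_eq_square)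
  qed
  moreover have "p > 2"
    using p assms(1) prime_ge_2_nat[OF p(1)] by (auto simp: le_less dest: dvd_trans[of 2 p n])
  moreover have "odd m" "squarefree m" "0 < m"
    using assms(1,2) n by (auto intro: squarefree_multD(2) simp: odd_pos)
  moreover have "m < n" using n \<open>0 < m\<close> prime_gt_1_nat[OF p(1)] by simp
  ultimately show ?thesis using that n p(1) by blast
qed

text \<open>Arbitrary signs, not just 1, are needed
  for the induction over the prime factors of \<open>n\<close>.\<close>
definition signed_zero_sum_weights ::
    "nat \<Rightarrow> (nat \<Rightarrow> int) \<Rightarrow> nat \<Rightarrow> nat \<Rightarrow> (nat \<Rightarrow> int) \<Rightarrow> (nat \<Rightarrow> int) \<Rightarrow> bool" where
  "signed_zero_sum_weights n x L u \<sigma> a \<longleftrightarrow>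
     (\<forall>i. coprime (a i) (int n)) \<and> [a u = 1] (mod int n)
     \<and> (\<forall>i<L. i \<noteq> u \<longrightarrow> \<not> coprime (x i) (int n) \<longrightarrow> jacobi_sym (a i) n = \<sigma> i)
     \<and> [(\<Sum>i<L. a i * x i) = 0] (mod int n)"

lemma signed_zero_sum_weights_crt:
  fixes p m :: nat
  assumes p: "prime p" "\<not> p dvd m" "m > 0"
    and "\<And>i. coprime (b i) (int m)" "[b u = 1] (mod int m)" "[(\<Sum>i<L. b i * x i) = 0] (mod int m)"
    and "\<And>i. coprime (c i) (int p)" "[c u = 1] (mod int p)" "[(\<Sum>i<L. c i * x i) = 0] (mod int p)"
    and "\<And>i. i < L \<Longrightarrow> i \<noteq> u \<Longrightarrow> \<not> coprime (x i) (int (p * m)) \<Longrightarrow>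
           Legendre (c i) (int p) * jacobi_sym (b i) m = \<sigma> i"
  shows "\<exists>a. signed_zero_sum_weights (p * m) x L u \<sigma> a"
proof -
  have coprime_pm: "coprime (int p) (int m)"
    using p(1,2) by (simp add: prime_imp_coprime)
  have "\<forall>i. \<exists>y. [y = c i] (mod int p) \<and> [y = b i] (mod int m)"
    using binary_chinese_remainder_int[OF coprime_pm] by blast
  then obtain a where a_p: "\<And>i. [a i = c i] (mod int p)" and a_m: "\<And>i. [a i = b i] (mod int m)"
    by metis
  have "coprime (a i) (int (p * m))" for i
    using cong_imp_coprime[OF cong_sym[OF a_p] assms(7)] cong_imp_coprime[OF cong_sym[OF a_m] assms(4)]
    by simp
  moreover have "[a u = 1] (mod int (p * m))"
    using coprime_cong_mult[OF cong_trans[OF a_p assms(8)] cong_trans[OF a_m assms(5)] coprime_pm]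
    by simp
  moreover have "jacobi_sym (a i) (p * m) = Legendre (c i) (int p) * jacobi_sym (b i) m" for i
    using jacobi_sym_prime_mult[OF p] Legendre_cong[OF a_p] jacobi_sym_cong[OF a_m] by simp
  moreover have "[(\<Sum>i<L. a i * x i) = 0] (mod int p)"
    using cong_sum[of "{..<L}" "\<lambda>i. a i * x i" "\<lambda>i. c i * x i"] a_p assms(9)
    by (metis cong_mult cong_refl cong_trans)
  moreover have "[(\<Sum>i<L. a i * x i) = 0] (mod int m)"
    using cong_sum[of "{..<L}" "\<lambda>i. a i * x i" "\<lambda>i. b i * x i"] a_m assms(6)
    by (metis cong_mult cong_refl cong_trans)
  then have "[(\<Sum>i<L. a i * x i) = 0] (mod int (p * m))"
    using coprime_cong_mult[OF calculation(4) _ coprime_pm] by simp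
  ultimately have "signed_zero_sum_weights (p * m) x L u \<sigma> a"
    using assms(10) unfolding signed_zero_sum_weights_def by auto
  then show ?thesis by blast
qed

lemma signed_zero_sum_weights_prime_mult:
  fixes p m :: nat
  assumes p: "prime p" "p > 2" "\<not> p dvd m" "m > 0"
    and "card {i. i < L \<and> coprime (x i) (int p)} \<ge> 2"
    and IH: "\<And>\<sigma>'. (\<And>i. \<sigma>' i \<in> {1, -1}) \<Longrightarrow> \<exists>b. signed_zero_sum_weights m x L u \<sigma>' b"
    and \<sigma>: "\<And>i. \<sigma> i \<in> {1, -1}"
  shows "\<exists>a. signed_zero_sum_weights (p * m) x L u \<sigma> a"
proof -
  obtain c0 where c0: "\<And>i. coprime (c0 i) (int p)" "[c0 u = 1] (mod int p)"
    "[(\<Sum>i<L. c0 i * x i) = 0] (mod int p)"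
    using prime_unit_weights_zero_sum[OF p(1,2) assms(5)] unit_weights_normalize by metis
  \<comment> \<open>The symbols of the weights modulo \<open>p\<close> on terms prime to \<open>p\<close> are absorbed into the
    targets modulo \<open>m\<close>; terms divisible by \<open>p\<close> are corrected modulo \<open>p\<close> afterwards.\<close>
  define \<sigma>' where "\<sigma>' i = \<sigma> i * Legendre (c0 i) (int p)" for i
  have "\<sigma>' i \<in> {1, -1}" for i
    using \<sigma>[of i] Legendre_coprime_pm1[OF p(1) c0(1)[of i]] by (auto simp: \<sigma>'_def)
  then obtain b where "signed_zero_sum_weights m x L u \<sigma>' b" using IH by blast
  then have b: "\<And>i. coprime (b i) (int m)" "[b u = 1] (mod int m)"
    "\<And>i. i < L \<Longrightarrow> i \<noteq> u \<Longrightarrow> \<not> coprime (x i) (int m) \<Longrightarrow> jacobi_sym (b i) m = \<sigma>' i"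
    "[(\<Sum>i<L. b i * x i) = 0] (mod int m)"
    by (auto simp: signed_zero_sum_weights_def)
  define I where "I = {i. i \<noteq> u \<and> int p dvd x i}"
  define \<tau> where "\<tau> i = \<sigma> i * jacobi_sym (b i) m" for i
  have \<tau>_sign: "\<tau> i \<in> {1, -1}" for i
    using \<sigma>[of i] jacobi_sym_coprime_pm1[OF b(1)[of i]] by (auto simp: \<tau>_def)
  have I_dvd: "int p dvd x i" if "i \<in> I" for i
    using that by (simp add: I_def)
  obtain c where c: "\<And>i. coprime (c i) (int p)" "\<And>i. i \<notin> I \<Longrightarrow> c i = c0 i"
    "\<And>i. i \<in> I \<Longrightarrow> Legendre (c i) (int p) = \<tau> i"
    "[(\<Sum>i<L. c i * x i) = (\<Sum>i<L. c0 i * x i)] (mod int p)"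
    using unit_weights_prescribe_Legendre[of p c0 I x \<tau> L, OF p(1,2) c0(1) I_dvd \<tau>_sign] by blast
  show ?thesis
  proof (rule signed_zero_sum_weights_crt[OF p(1,3,4) b(1,2,4) c(1)])
    show "[c u = 1] (mod int p)" using c(2) c0(2) by (simp add: I_def)
    show "[(\<Sum>i<L. c i * x i) = 0] (mod int p)" using cong_trans[OF c(4) c0(3)] .
    fix i assume i: "i < L" "i \<noteq> u" "\<not> coprime (x i) (int (p * m))"
    show "Legendre (c i) (int p) * jacobi_sym (b i) m = \<sigma> i"
    proof (cases "i \<in> I")
      case True
      then show ?thesis using jacobi_sym_coprime_pm1[OF b(1)[of i]] c(3) by (auto simp: \<tau>_def)
    next
      case False
      then have "coprime (x i) (int p)"
        using i(2) coprime_int_prime_iff[OF p(1)] by (simp add: I_def)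
      then have "\<not> coprime (x i) (int m)" using i(3) by simp
      then show ?thesis
        using b(3)[OF i(1,2)] c(2)[OF False] Legendre_coprime_pm1[OF p(1) c0(1)[of i]]
        by (auto simp: \<sigma>'_def)
    qed
  qed
qed

lemma signed_zero_sum_weights_exist:
  fixes n :: nat and x \<sigma> :: "nat \<Rightarrow> int"
  assumes "odd n" "squarefree n"
    and "\<And>p. prime p \<Longrightarrow> p dvd n \<Longrightarrow> card {i. i < L \<and> coprime (x i) (int p)} \<ge> 2"
    and "\<And>i. \<sigma> i \<in> {1, -1}"
  shows "\<exists>a. signed_zero_sum_weights n x L u \<sigma> a"
  using assms
proof (induction n arbitrary: \<sigma> rule: less_induct)
  case (less n)
  show ?case
  proof (cases "n = 1")
    case True
    then show ?thesis
      by (intro exI[of _ "\<lambda>_. 1"]) (simp add: signed_zero_sum_weights_def)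
  next
    case False
    obtain p m where n: "n = p * m" and p: "prime p" "p > 2" "\<not> p dvd m"
      and m: "odd m" "squarefree m" "0 < m" "m < n"
      using odd_squarefree_prime_split[OF less.prems(1,2) False] by blast
    have "card {i. i < L \<and> coprime (x i) (int q)} \<ge> 2" if "prime q" "q dvd m" for q
      using less.prems(3) that n by simp
    then have "\<exists>b. signed_zero_sum_weights m x L u \<sigma>' b" if "\<And>i. \<sigma>' i \<in> {1, -1}" for \<sigma>'
      using less.IH[OF m(4) m(1,2)] that by blast
    then show ?thesis
      using signed_zero_sum_weights_prime_mult[OF p m(3) less.prems(3)[OF p(1)]] less.prems(4)
      by (simp add: n)
  qed
qed

lemma mod_in_S_set:
  assumes "n > 0" "coprime a (int n)" "jacobi_sym a n = 1"
  shows "a mod int n \<in> S_set n"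
proof -
  have mod_cong: "[a mod int n = a] (mod int n)" by (simp add: cong_def)
  have "coprime (a mod int n) (int n)"
    using cong_imp_coprime[OF cong_sym[OF mod_cong] assms(2)] .
  moreover have "jacobi_sym (a mod int n) n = 1"
    using jacobi_sym_cong[OF mod_cong] assms(3) by simp
  ultimately show ?thesis using assms(1) by (simp add: S_set_def)
qed

lemma weighted_zero_sumI:
  assumes "\<And>i. i < length xs \<Longrightarrow> a i mod int n \<in> A"
    and "[(\<Sum>i<length xs. a i * xs ! i) = 0] (mod int n)"
  shows "weighted_zero_sum n A xs"
  unfolding weighted_zero_sum_def
proof (intro exI conjI)
  let ?as = "map (\<lambda>i. a i mod int n) [0..<length xs]"
  show "length ?as = length xs" "set ?as \<subseteq> A" using assms(1) by auto
  have "[(\<Sum>i<length xs. ?as ! i * xs ! i) = (\<Sum>i<length xs. a i * xs ! i)] (mod int n)"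
    by (intro cong_sum) (simp add: cong_def mod_mult_left_eq)
  then show "[(\<Sum>i<length xs. ?as ! i * xs ! i) = 0] (mod int n)"
    using assms(2) by (rule cong_trans)
qed

lemma card_le_1_obtain_unique:
  fixes L :: nat
  assumes "card {i. i < L \<and> P i} \<le> 1"
  obtains u where "\<And>i. i < L \<Longrightarrow> P i \<Longrightarrow> i = u"
proof -
  have "\<forall>i\<in>{i. i < L \<and> P i}. \<forall>j\<in>{i. i < L \<and> P i}. i = j"
    using assms by (simp add: card_le_Suc0_iff_eq)
  then show ?thesis using that by blast
qed

lemma signed_zero_sum_weights_imp_weighted_zero_sum:
  assumes "n > 0" "signed_zero_sum_weights n ((!) xs) (length xs) u (\<lambda>_. 1) a"
    and "\<And>i. i < length xs \<Longrightarrow> i \<noteq> u \<Longrightarrow> \<not> coprime (xs ! i) (int n)"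
  shows "weighted_zero_sum n (S_set n) xs"
proof (rule weighted_zero_sumI[of xs a])
  have a: "\<And>i. coprime (a i) (int n)" "[a u = 1] (mod int n)"
    "\<And>i. i < length xs \<Longrightarrow> i \<noteq> u \<Longrightarrow> \<not> coprime (xs ! i) (int n) \<Longrightarrow> jacobi_sym (a i) n = 1"
    "[(\<Sum>i<length xs. a i * xs ! i) = 0] (mod int n)"
    using assms(2) by (auto simp: signed_zero_sum_weights_def)
  have "jacobi_sym (a i) n = 1" if "i < length xs" for i
  proof (cases "i = u")
    case True
    then show ?thesis using jacobi_sym_cong[OF a(2)] by (simp add: jacobi_sym_one)
  next
    case False
    then show ?thesis using a(3) assms(3) that by blast
  qed
  then show "a i mod int n \<in> S_set n" if "i < length xs" for i
    using mod_in_S_set[OF assms(1) a(1)] that by blast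
  show "[(\<Sum>i<length xs. a i * xs ! i) = 0] (mod int n)" by (rule a(4))
qed

theorem lemma2p10:
  fixes n :: nat and xs :: "int list"
  assumes "odd n" and "squarefree n"
    and "set xs \<subseteq> {0..<int n}"
    and "\<And>p. prime p \<Longrightarrow> p dvd n \<Longrightarrow>
           card {i. i < length xs \<and> coprime (xs ! i) (int p)} \<ge> 2"
    and "card {i. i < length xs \<and> coprime (xs ! i) (int n)} \<le> 1"
  shows "weighted_zero_sum n (S_set n) xs"
proof -
  obtain u where u: "\<And>i. i < length xs \<Longrightarrow> coprime (xs ! i) (int n) \<Longrightarrow> i = u"
    using card_le_1_obtain_unique[OF assms(5)] by blast
  obtain a where "signed_zero_sum_weights n ((!) xs) (length xs) u (\<lambda>_. 1) a"
    using signed_zero_sum_weights_exist[OF assms(1,2,4)] by fastforce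
  then show ?thesis
    using signed_zero_sum_weights_imp_weighted_zero_sum odd_pos[OF assms(1)] u by blast
qed

end
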